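(* Let $G$ be an undirected graph, $(V(G),\mathcal C)$ its corresponding connectoid, and $U\subseteq V(G)$. The following are equivalent: (a) there is a normal tree in $G$ containing $U$; (b) there is a normal tree of $(V(G),\mathcal C)$ containing $U$; (c) there is a weak normal tree of $(V(G),\mathcal C)$ containing $U$.
   Context: A connectoid is given by a set $S$ and a set $\mathcal F$ of finite subsets of $S$ such that (i) $F\cup F'\in\mathcal F$ whenever $F,F'\in\mathcal F$ and $F\cap F'\neq\emptyset$, and (ii) $\emptyset\in\mathcal F$ and $\{s\}\in\mathcal F$ for every $s\in S$. A set $C\subseteq S$ is connected if for all $x,y\in C$ there is $F\in\mathcal F$ with $F\subseteq C$ and $x,y\in F$; $\mathcal C$ is the set of connected sets. The corresponding connectoid of $G$ has $S=V(G)$ and $\mathcal F$ the vertex sets of finite connected subgraphs of $G$, so its connected sets are the vertex sets of connected subgraphs of $G$. For $S'\subseteq S$, $\mathcal K(S')$ denotes the set of maximal connected subsets of $S'$. A necklace is a connected set $N$ for which there is a family $(H_n)_{n\in\mathbb N}$ of finite connected sets with $N=\bigcup_n H_n$ and $H_i\cap H_j\neq\emptyset$ iff $|i-j|\le 1$. For a rooted tree $T$ with tree order $\le_T$ and $t\in V(T)$, let $\mathrm{Down}^\circ_T(t)=\{x\in V(T):x<_T t\}$. A weak normal tree of $(S,\mathcal C)$ is a rooted undirected tree $T$ with $V(T)\subseteq S$ (not required to be a subgraph of anything) such that (1) for every $C\in\mathcal C$ and every two $\le_T$-incomparable $u,v\in C\cap V(T)$ there is $w\in C$ with $w\le_T u$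 and $w\le_T v$, and (2) for all $u\le_T v$ in $V(T)$ there is $C\in\mathcal C$ containing $u,v$ with $C\cap\mathrm{Down}^\circ_T(u)=\emptyset$. It is a normal tree if moreover for every rooted ray $R$ of $T$ some necklace contains all but finitely many vertices of $R$. A tree "contains $U$" if $U\subseteq V(T)$. A normal tree in the graph $G$ is a rooted tree $T\subseteq G$ (a subgraph) such that the end vertices of every path in $G$ with only its end vertices in $T$ are $\le_T$-comparable (equivalently, every two vertices of $T$ adjacent in $G$ and, more generally, joined by a $T$-path in $G$, are comparable). *)

theory Defs
  imports Main
begin

text \<open>Graphs are given by a vertex set V and a symmetric edge relation E \<subseteq> V \<times> V
 (possibly infinite). Paths are lists of distinct vertices, consecutive ones adjacent.\<close>

definition is_path :: "('a \<times> 'a) set \<Rightarrow> 'a list \<Rightarrow> bool" where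
  "is_path E xs \<longleftrightarrow> xs \<noteq> [] \<and> distinct xs \<and> (\<forall>i. Suc i < length xs \<longrightarrow> (xs ! i, xs ! Suc i) \<in> E)"

definition gconnected :: "('a \<times> 'a) set \<Rightarrow> 'a set \<Rightarrow> bool" where
  "gconnected E X \<longleftrightarrow> (\<forall>x\<in>X. \<forall>y\<in>X. (x, y) \<in> (E \<inter> (X \<times> X))\<^sup>*)"

definition connectoid :: "'a set \<Rightarrow> 'a set set \<Rightarrow> bool" where
  "connectoid S F \<longleftrightarrow> (\<forall>X\<in>F. finite X \<and> X \<subseteq> S)
     \<and> (\<forall>X\<in>F. \<forall>Y\<in>F. X \<inter> Y \<noteq> {} \<longrightarrow> X \<union> Y \<in> F)
     \<and> {} \<in> F \<and> (\<forall>s\<in>S. {s} \<in> F)"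

definition conn_sets :: "'a set \<Rightarrow> 'a set set \<Rightarrow> 'a set set" where
  "conn_sets S F = {C. C \<subseteq> S \<and> (\<forall>x\<in>C. \<forall>y\<in>C. \<exists>X\<in>F. X \<subseteq> C \<and> x \<in> X \<and> y \<in> X)}"

definition graph_F :: "'a set \<Rightarrow> ('a \<times> 'a) set \<Rightarrow> 'a set set" where
  "graph_F V E = {X. finite X \<and> X \<subseteq> V \<and> gconnected E X}"

definition graph_C :: "'a set \<Rightarrow> ('a \<times> 'a) set \<Rightarrow> 'a set set" where
  "graph_C V E = conn_sets V (graph_F V E)"

definition is_tree :: "'a set \<Rightarrow> ('a \<times> 'a) set \<Rightarrow> bool" where
  "is_tree VT ET \<longleftrightarrow> ET \<subseteq> VT \<times> VT \<and> sym ET \<and> irrefl ET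
     \<and> (\<forall>x\<in>VT. \<forall>y\<in>VT. (x, y) \<in> ET\<^sup>*)
     \<and> \<not> (\<exists>xs. length xs \<ge> 3 \<and> is_path ET xs \<and> (last xs, hd xs) \<in> ET)"

definition rooted_tree :: "'a set \<Rightarrow> ('a \<times> 'a) set \<Rightarrow> 'a \<Rightarrow> bool" where
  "rooted_tree VT ET r \<longleftrightarrow> is_tree VT ET \<and> r \<in> VT"

definition tree_le :: "('a \<times> 'a) set \<Rightarrow> 'a \<Rightarrow> 'a \<Rightarrow> 'a \<Rightarrow> bool" where
  "tree_le ET r x y \<longleftrightarrow> (\<exists>p. is_path ET p \<and> hd p = r \<and> last p = y \<and> x \<in> set p)"

definition down_open :: "('a \<times> 'a) set \<Rightarrow> 'a \<Rightarrow> 'a \<Rightarrow> 'a set" where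
  "down_open ET r t = {x. tree_le ET r x t \<and> x \<noteq> t}"

definition comparable_T :: "('a \<times> 'a) set \<Rightarrow> 'a \<Rightarrow> 'a \<Rightarrow> 'a \<Rightarrow> bool" where
  "comparable_T ET r u v \<longleftrightarrow> tree_le ET r u v \<or> tree_le ET r v u"

definition necklace :: "'a set set \<Rightarrow> 'a set \<Rightarrow> bool" where
  "necklace \<C> N \<longleftrightarrow> N \<in> \<C> \<and> (\<exists>H :: nat \<Rightarrow> 'a set.
     (\<forall>n. finite (H n) \<and> H n \<in> \<C>) \<and> N = (\<Union>n. H n)
     \<and> (\<forall>i j. H i \<inter> H j \<noteq> {} \<longleftrightarrow> (i \<le> j + 1 \<and> j \<le> i + 1)))"

definition weak_normal_tree :: "'a set \<Rightarrow> 'a set set \<Rightarrow> 'a set \<Rightarrow> ('a \<times> 'a) set \<Rightarrow> 'a \<Rightarrow> bool" where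
  "weak_normal_tree S \<C> VT ET r \<longleftrightarrow> rooted_tree VT ET r \<and> VT \<subseteq> S
     \<and> (\<forall>C\<in>\<C>. \<forall>u\<in>C \<inter> VT. \<forall>v\<in>C \<inter> VT. \<not> comparable_T ET r u v \<longrightarrow>
           (\<exists>w\<in>C. tree_le ET r w u \<and> tree_le ET r w v))
     \<and> (\<forall>u\<in>VT. \<forall>v\<in>VT. tree_le ET r u v \<longrightarrow>
           (\<exists>C\<in>\<C>. u \<in> C \<and> v \<in> C \<and> C \<inter> down_open ET r u = {}))"

definition rooted_ray :: "('a \<times> 'a) set \<Rightarrow> 'a \<Rightarrow> (nat \<Rightarrow> 'a) \<Rightarrow> bool" where
  "rooted_ray ET r f \<longleftrightarrow> inj f \<and> f 0 = r \<and> (\<forall>n. (f n, f (Suc n)) \<in> ET)"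

definition normal_tree_cn :: "'a set \<Rightarrow> 'a set set \<Rightarrow> 'a set \<Rightarrow> ('a \<times> 'a) set \<Rightarrow> 'a \<Rightarrow> bool" where
  "normal_tree_cn S \<C> VT ET r \<longleftrightarrow> weak_normal_tree S \<C> VT ET r
     \<and> (\<forall>f. rooted_ray ET r f \<longrightarrow> (\<exists>N. necklace \<C> N \<and> finite (range f - N)))"

definition normal_tree_graph :: "'a set \<Rightarrow> ('a \<times> 'a) set \<Rightarrow> 'a set \<Rightarrow> ('a \<times> 'a) set \<Rightarrow> 'a \<Rightarrow> bool" where
  "normal_tree_graph V E VT ET r \<longleftrightarrow> rooted_tree VT ET r \<and> VT \<subseteq> V \<and> ET \<subseteq> E
     \<and> (\<forall>p. is_path E p \<and> length p \<ge> 2 \<and> hd p \<in> VT \<and> last p \<in> VT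
            \<and> (\<forall>i. 0 < i \<and> i < length p - 1 \<longrightarrow> p ! i \<notin> VT)
            \<longrightarrow> comparable_T ET r (hd p) (last p))"

end

theory Submission
  imports Defs
begin

text \<open>
  (a) \<Longrightarrow> (b): if T is a normal tree of G, every path of G between vertices of T contains a
  vertex below both ends (split the path at its inner vertices in T), which gives the first
  condition of a weak normal tree; the tree path from u up to v is a connected set avoiding
  everything strictly below u; and every rooted ray of T is itself a necklace, its beads
  being its edges.

  (b) \<Longrightarrow> (c) is trivial.

  (c) \<Longrightarrow> (a): given a weak normal tree T, build normal trees T_0 \<subseteq> T_1 \<subseteq> \<dots> of G, all of
  whose chains are finite, such that T_n contains the vertices of T of height at most n.
  A vertex s of T of height n+1 that is missing from T_n lies in a component D of G - T_n.
  By normality the neighbours of D in T_n form a chain, which is finite and so has a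
  greatest element m; attach to m a path in D ending in s. Distinct such s lie in distinct
  components: a connected set containing two of them must, by weak normality, contain a
  common lower bound, which has height at most n and so lies in T_n. The union of the T_n is
  the required normal tree.
\<close>

section \<open>Paths\<close>

lemma is_path_singleton [simp]: "is_path E [x]"
  by (simp add: is_path_def)

lemma is_path_nonempty: "is_path E p \<Longrightarrow> p \<noteq> []"
  by (simp add: is_path_def)

lemma is_path_mono: "is_path A p \<Longrightarrow> A \<subseteq> B \<Longrightarrow> is_path B p"
  unfolding is_path_def by blast

lemma is_path_take: "is_path E p \<Longrightarrow> 0 < k \<Longrightarrow> is_path E (take k p)"
  unfolding is_path_def by auto

lemma is_path_drop: "is_path E p \<Longrightarrow> k < length p \<Longrightarrow> is_path E (drop k p)"
  unfolding is_path_def by (auto simp: add.commute)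

lemma is_path_split:
  assumes "is_path E p" "i < length p"
  shows "is_path E (take (Suc i) p)" "hd (take (Suc i) p) = hd p" "last (take (Suc i) p) = p ! i"
    and "is_path E (drop i p)" "hd (drop i p) = p ! i" "last (drop i p) = last p"
proof -
  show "is_path E (take (Suc i) p)" "is_path E (drop i p)"
    using assms is_path_take is_path_drop by auto
  show "hd (take (Suc i) p) = hd p" "hd (drop i p) = p ! i" "last (drop i p) = last p"
    using assms(2) by (simp_all add: hd_drop_conv_nth)
  show "last (take (Suc i) p) = p ! i"
    using assms(2) by (subst last_conv_nth) (auto simp: min_def intro!: arg_cong[where f="(!) p"])
qed

lemma is_path_Cons: "is_path E p \<Longrightarrow> x \<notin> set p \<Longrightarrow> (x, hd p) \<in> E \<Longrightarrow> is_path E (x # p)"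
  unfolding is_path_def
  by (auto simp: nth_Cons split: nat.splits) (metis hd_conv_nth)

lemma is_path_snoc: "is_path E p \<Longrightarrow> y \<notin> set p \<Longrightarrow> (last p, y) \<in> E \<Longrightarrow> is_path E (p @ [y])"
  unfolding is_path_def
proof (intro conjI allI impI; (elim conjE)?)
  fix i assume "p \<noteq> []" "(last p, y) \<in> E" "\<forall>i. Suc i < length p \<longrightarrow> (p ! i, p ! Suc i) \<in> E"
    and "Suc i < length (p @ [y])"
  then show "((p @ [y]) ! i, (p @ [y]) ! Suc i) \<in> E"
  proof (cases "Suc i < length p")
    case False
    then have "i = length p - 1" using \<open>Suc i < length (p @ [y])\<close> by simp
    then show ?thesis using \<open>p \<noteq> []\<close> \<open>(last p, y) \<in> E\<close> by (simp add: nth_append last_conv_nth)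
  qed (simp add: nth_append)
qed auto

lemma is_path_snocD:
  assumes "is_path E (p @ [y])" "p \<noteq> []"
  shows "is_path E p \<and> y \<notin> set p \<and> (last p, y) \<in> E"
proof -
  have "is_path E p"
    using is_path_take[OF assms(1), of "length p"] assms(2) by simp
  moreover obtain n where n: "length p = Suc n" using assms(2) by (cases p) auto
  then have "((p @ [y]) ! n, (p @ [y]) ! Suc n) \<in> E"
    using assms(1) unfolding is_path_def by simp
  then have "(last p, y) \<in> E" using n assms(2) by (simp add: last_conv_nth nth_append)
  ultimately show ?thesis using assms(1) unfolding is_path_def by auto
qed

lemma is_path_rev: "sym E \<Longrightarrow> is_path E p \<Longrightarrow> is_path E (rev p)"
  unfolding is_path_def
proof (intro conjI allI impI; (elim conjE)?)
  fix i assume s: "sym E" and e: "\<forall>i. Suc i < length p \<longrightarrow> (p ! i, p ! Suc i) \<in> E"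
    and i: "Suc i < length (rev p)"
  have "(p ! (length p - Suc (Suc i)), p ! Suc (length p - Suc (Suc i))) \<in> E"
    using e i by auto
  moreover have "Suc (length p - Suc (Suc i)) = length p - Suc i" using i by auto
  ultimately show "(rev p ! i, rev p ! Suc i) \<in> E"
    using i s by (auto simp: rev_nth dest: symD)
qed auto

lemma is_path_subset:
  assumes "is_path E p" "E \<subseteq> X \<times> X" "hd p \<in> X"
  shows "set p \<subseteq> X"
proof
  fix z assume "z \<in> set p"
  then obtain i where i: "i < length p" "p ! i = z" by (auto simp: in_set_conv_nth)
  show "z \<in> X"
  proof (cases i)
    case 0
    then show ?thesis using assms(1,3) i by (simp add: hd_conv_nth is_path_nonempty)
  next
    case (Suc j)
    then have "(p ! j, p ! Suc j) \<in> E" using assms(1) i unfolding is_path_def by auto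
    then show ?thesis using assms(2) i Suc by auto
  qed
qed

lemma inner_rev:
  assumes "\<forall>j. 0 < j \<and> j < length P - 1 \<longrightarrow> P ! j \<notin> B"
  shows "\<forall>j. 0 < j \<and> j < length (rev P) - 1 \<longrightarrow> rev P ! j \<notin> B"
proof (intro allI impI)
  fix j assume j: "0 < j \<and> j < length (rev P) - 1"
  then have "j < length P" by (simp only: length_rev) linarith
  then have "rev P ! j = P ! (length P - Suc j)" by (rule rev_nth)
  moreover have "0 < length P - Suc j \<and> length P - Suc j < length P - 1" using j by auto
  ultimately show "rev P ! j \<notin> B" using assms by simp
qed

lemma is_path_hd_eq_last: "is_path E p \<Longrightarrow> hd p = last p \<Longrightarrow> p = [hd p]"
proof (rule ccontr)
  assume "is_path E p" "hd p = last p" "p \<noteq> [hd p]"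
  then have "distinct p" "p \<noteq> []" "p ! 0 = p ! (length p - 1)"
    by (auto simp: is_path_def hd_conv_nth last_conv_nth)
  moreover from this \<open>p \<noteq> [hd p]\<close> have "length p \<ge> 2" by (cases p) (auto simp: Suc_le_eq)
  ultimately show False using nth_eq_iff_index_eq[of p 0 "length p - 1"] by auto
qed

lemma is_path_rtrancl_nth:
  assumes "is_path E p" "set p \<subseteq> X" "i \<le> j" "j < length p"
  shows "(p ! i, p ! j) \<in> (E \<inter> X \<times> X)\<^sup>*"
  using assms(3,4)
proof (induction j)
  case (Suc j)
  show ?case
  proof (cases "i = Suc j")
    case False
    then have "(p ! i, p ! j) \<in> (E \<inter> X \<times> X)\<^sup>*" using Suc by auto
    moreover have "(p ! j, p ! Suc j) \<in> E \<inter> X \<times> X"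
      using assms(1,2) Suc.prems unfolding is_path_def by (auto simp: subset_iff)
    ultimately show ?thesis by (rule rtrancl_into_rtrancl)
  qed simp
qed simp

lemma is_path_rtrancl:
  assumes "is_path E p" "set p \<subseteq> X"
  shows "(hd p, last p) \<in> (E \<inter> X \<times> X)\<^sup>*"
  using is_path_rtrancl_nth[OF assms, of 0 "length p - 1"] is_path_nonempty[OF assms(1)]
  by (simp add: hd_conv_nth last_conv_nth)

lemma rtrancl_imp_path:
  assumes "(x, y) \<in> (E \<inter> X \<times> X)\<^sup>*" "x \<in> X"
  shows "\<exists>p. is_path E p \<and> hd p = x \<and> last p = y \<and> set p \<subseteq> X"
  using assms
proof (induction rule: converse_rtrancl_induct)
  case base
  then show ?case by (intro exI[of _ "[y]"]) auto
next
  case (step x z)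
  then obtain q where q: "is_path E q" "hd q = z" "last q = y" "set q \<subseteq> X" by auto
  show ?case
  proof (cases "x \<in> set q")
    case True
    then obtain k where k: "k < length q" "q ! k = x" by (auto simp: in_set_conv_nth)
    then show ?thesis
      using is_path_drop[OF q(1) k(1)] q(3,4) set_drop_subset[of k q]
      by (intro exI[of _ "drop k q"]) (auto simp: hd_drop_conv_nth)
  next
    case False
    then show ?thesis
      using is_path_Cons[OF q(1) False] step q is_path_nonempty[OF q(1)]
      by (intro exI[of _ "x # q"]) auto
  qed
qed

lemma sym_Restr_rtrancl: "sym R \<Longrightarrow> (x, y) \<in> (R \<inter> X \<times> X)\<^sup>* \<Longrightarrow> (y, x) \<in> (R \<inter> X \<times> X)\<^sup>*"
  by (metis sym_Int converse_Times sym_conv_converse_eq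
      sym_rtrancl symD)

lemma Restr_rtrancl_in: "(a, b) \<in> (R \<inter> X \<times> X)\<^sup>* \<Longrightarrow> a \<in> X \<Longrightarrow> b \<in> X"
  by (induction rule: rtrancl_induct) auto

lemma first_exit:
  assumes "(a, b) \<in> (E \<inter> V \<times> V)\<^sup>*" "a \<in> V - A" "b \<in> A"
  shows "\<exists>d c. (a, d) \<in> (E \<inter> (V - A) \<times> (V - A))\<^sup>* \<and> (d, c) \<in> E \<and> c \<in> A"
  using assms
proof (induction rule: converse_rtrancl_induct)
  case (step a z)
  show ?case
  proof (cases "z \<in> A")
    case False
    with step obtain d c where "(z, d) \<in> (E \<inter> (V - A) \<times> (V - A))\<^sup>*" "(d, c) \<in> E" "c \<in> A"
      by blast
    moreover have "(a, z) \<in> E \<inter> (V - A) \<times> (V - A)" using step.hyps(1) step.prems False by auto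
    ultimately show ?thesis by (meson converse_rtrancl_into_rtrancl)
  qed (use step.hyps(1) in blast)
qed simp

section \<open>The tree order of a rooted tree\<close>

lemma tree_no_detour:
  assumes T: "is_tree VT ET" and xy: "(x, y) \<in> ET" "(x', y) \<in> ET" and "x \<noteq> x'"
    and detour: "(x', x) \<in> (ET \<inter> W \<times> W)\<^sup>*" "x' \<in> W" and "y \<notin> W"
  shows False
proof -
  have symE: "sym ET" using T unfolding is_tree_def by blast
  obtain c where c: "is_path ET c" "hd c = x'" "last c = x" "set c \<subseteq> W"
    using rtrancl_imp_path[OF detour] by blast
  have "(y, hd c) \<in> ET" using xy(2) c(2) symE by (auto dest: symD)
  then have cycle: "is_path ET (y # c)"
    using is_path_Cons[OF c(1)] c(4) \<open>y \<notin> W\<close> by blast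
  have "length c \<ge> 2"
    using c(2,3) \<open>x \<noteq> x'\<close> is_path_nonempty[OF c(1)] by (cases c; cases "tl c") auto
  moreover have "(last (y # c), hd (y # c)) \<in> ET"
    using xy(1) c(3) is_path_nonempty[OF c(1)] by simp
  ultimately show False using cycle T unfolding is_tree_def by fastforce
qed

lemma tree_paths_last_edge:
  assumes T: "is_tree VT ET" and p: "is_path ET (p @ [y])" "p \<noteq> []"
    and q: "is_path ET (q @ [y])" "q \<noteq> []" and hd: "hd p = hd q"
  shows "last p = last q"
proof (rule ccontr)
  assume ne: "last p \<noteq> last q"
  have symE: "sym ET" using T unfolding is_tree_def by auto
  have P: "is_path ET p" "y \<notin> set p" "(last p, y) \<in> ET" using is_path_snocD[OF p] by blast+
  have Q: "is_path ET q" "y \<notin> set q" "(last q, y) \<in> ET" using is_path_snocD[OF q] by blast+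
  define W where "W = set p \<union> set q"
  have "(hd q, last q) \<in> (ET \<inter> W \<times> W)\<^sup>*"
    by (rule is_path_rtrancl[OF Q(1)]) (simp add: W_def)
  then have "(last q, hd p) \<in> (ET \<inter> W \<times> W)\<^sup>*"
    using hd by (simp add: sym_Restr_rtrancl[OF symE])
  moreover have "(hd p, last p) \<in> (ET \<inter> W \<times> W)\<^sup>*"
    by (rule is_path_rtrancl[OF P(1)]) (simp add: W_def)
  ultimately have "(last q, last p) \<in> (ET \<inter> W \<times> W)\<^sup>*"
    by (rule rtrancl_trans)
  moreover have "last q \<in> W" "y \<notin> W" using q(2) P(2) Q(2) W_def by auto
  ultimately show False by (rule tree_no_detour[OF T P(3) Q(3) ne])
qed

lemma tree_path_unique:
  assumes T: "is_tree VT ET"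
  shows "is_path ET p \<Longrightarrow> is_path ET q \<Longrightarrow> hd p = hd q \<Longrightarrow> last p = last q \<Longrightarrow> p = q"
proof (induction "length p + length q" arbitrary: p q rule: less_induct)
  case less
  obtain p' y where p: "p = p' @ [y]"
    using is_path_nonempty[OF less.prems(1)] by (metis rev_exhaust)
  obtain q' where q: "q = q' @ [y]"
    using is_path_nonempty[OF less.prems(2)] less.prems(4) p by (metis last_snoc rev_exhaust)
  consider "p' = []" | "q' = []" | "p' \<noteq> []" "q' \<noteq> []" by blast
  then show ?case
  proof cases
    case 1
    then show ?thesis using less.prems is_path_hd_eq_last[OF less.prems(2)] p by simp
  next
    case 2
    then show ?thesis using less.prems is_path_hd_eq_last[OF less.prems(1)] q by simp
  next
    case 3
    have P: "is_path ET (p' @ [y])" and Q: "is_path ET (q' @ [y])"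
      using less.prems(1,2) p q by simp_all
    have "hd p' = hd q'" using less.prems(3) p q 3 by simp
    then have "last p' = last q'" by (rule tree_paths_last_edge[OF T P 3(1) Q 3(2)])
    moreover have "is_path ET p'" "is_path ET q'"
      using is_path_snocD[OF P 3(1)] is_path_snocD[OF Q 3(2)] by simp_all
    ultimately show ?thesis using less.hyps[of p' q'] \<open>hd p' = hd q'\<close> p q by simp
  qed
qed

locale rtree =
  fixes VT :: "'a set" and ET :: "('a \<times> 'a) set" and r :: 'a
  assumes rooted_tree: "rooted_tree VT ET r"
begin

lemma is_tree: "is_tree VT ET" and root_in: "r \<in> VT"
  and edges_subset: "ET \<subseteq> VT \<times> VT"
  using rooted_tree unfolding rooted_tree_def is_tree_def by auto

lemma path_subset: "is_path ET p \<Longrightarrow> hd p \<in> VT \<Longrightarrow> set p \<subseteq> VT"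
  using is_path_subset edges_subset by blast

lemma ex_root_path: "y \<in> VT \<Longrightarrow> \<exists>p. is_path ET p \<and> hd p = r \<and> last p = y"
proof -
  assume y: "y \<in> VT"
  have "(r, y) \<in> ET\<^sup>*" using rooted_tree y root_in unfolding rooted_tree_def is_tree_def by blast
  moreover have "ET \<inter> VT \<times> VT = ET" using edges_subset by auto
  ultimately show ?thesis using rtrancl_imp_path[of r y ET VT] root_in by auto
qed

definition root_path :: "'a \<Rightarrow> 'a list" where
  "root_path y = (THE p. is_path ET p \<and> hd p = r \<and> last p = y)"

lemma root_path_eq:
  "is_path ET p \<Longrightarrow> hd p = r \<Longrightarrow> last p = y \<Longrightarrow> root_path y = p"
  unfolding root_path_def using tree_path_unique[OF is_tree] by blast

lemma root_path:
  "y \<in> VT \<Longrightarrow> is_path ET (root_path y) \<and> hd (root_path y) = r \<and> last (root_path y) = y"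
  using ex_root_path[of y] root_path_eq by auto

lemma root_path_nonempty: "y \<in> VT \<Longrightarrow> root_path y \<noteq> []"
  using root_path is_path_nonempty by blast

lemma root_path_subset: "y \<in> VT \<Longrightarrow> set (root_path y) \<subseteq> VT"
  using root_path path_subset root_in by metis

lemma root_path_take:
  assumes "y \<in> VT" "k < length (root_path y)"
  shows "root_path (root_path y ! k) = take (Suc k) (root_path y)"
  using root_path[OF assms(1)] is_path_split[of ET "root_path y" k] assms(2)
  by (intro root_path_eq) auto

definition height :: "'a \<Rightarrow> nat" where
  "height y = length (root_path y) - 1"

lemma height_nth: "y \<in> VT \<Longrightarrow> k < length (root_path y) \<Longrightarrow> height (root_path y ! k) = k"
  using root_path_take unfolding height_def by simp

lemma root_path_height: "y \<in> VT \<Longrightarrow> root_path y ! height y = y"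
  using root_path root_path_nonempty unfolding height_def by (metis last_conv_nth)

lemma height_root: "height r = 0"
  using root_path_eq[of "[r]" r] unfolding height_def by simp

lemma tree_le_iff: "tree_le ET r x y \<longleftrightarrow> y \<in> VT \<and> x \<in> set (root_path y)"
proof
  assume "tree_le ET r x y"
  then obtain p where p: "is_path ET p" "hd p = r" "last p = y" "x \<in> set p"
    unfolding tree_le_def by blast
  have "y \<in> set p" using p(1,3) is_path_nonempty by fastforce
  then have "y \<in> VT" using path_subset p root_in by blast
  then show "y \<in> VT \<and> x \<in> set (root_path y)" using p root_path_eq[OF p(1-3)] by simp
next
  assume "y \<in> VT \<and> x \<in> set (root_path y)"
  then show "tree_le ET r x y" unfolding tree_le_def using root_path by blast
qed

lemma tree_le_in: "tree_le ET r x y \<Longrightarrow> x \<in> VT \<and> y \<in> VT"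
  using tree_le_iff root_path_subset by blast

lemma tree_le_refl: "x \<in> VT \<Longrightarrow> tree_le ET r x x"
proof -
  assume x: "x \<in> VT"
  have "last (root_path x) \<in> set (root_path x)" using root_path_nonempty[OF x] by simp
  then show ?thesis using root_path[OF x] tree_le_iff x by simp
qed

lemma tree_le_root: "x \<in> VT \<Longrightarrow> tree_le ET r r x"
proof -
  assume x: "x \<in> VT"
  have "hd (root_path x) \<in> set (root_path x)" using root_path_nonempty[OF x] by simp
  then show ?thesis using root_path[OF x] tree_le_iff x by simp
qed

lemma tree_le_nth:
  assumes "tree_le ET r x y"
  shows "y \<in> VT \<and> height x < length (root_path y) \<and> root_path y ! height x = x"
proof -
  have y: "y \<in> VT" and "x \<in> set (root_path y)" using assms tree_le_iff by auto
  then obtain k where "k < length (root_path y)" "root_path y ! k = x"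
    by (auto simp: in_set_conv_nth)
  then show ?thesis using height_nth[OF y] y by auto
qed

lemma tree_le_height: "tree_le ET r x y \<Longrightarrow> height x \<le> height y"
  using tree_le_nth unfolding height_def by fastforce

lemma tree_le_height_eq: "tree_le ET r x y \<Longrightarrow> height x = height y \<Longrightarrow> x = y"
  using tree_le_nth[of x y] root_path_height by force

lemma set_root_path_mono:
  assumes "tree_le ET r x y"
  shows "set (root_path x) \<subseteq> set (root_path y)"
proof -
  from tree_le_nth[OF assms] have "root_path x = take (Suc (height x)) (root_path y)"
    using root_path_take by metis
  then show ?thesis by (metis set_take_subset)
qed

lemma tree_le_trans: "tree_le ET r x y \<Longrightarrow> tree_le ET r y z \<Longrightarrow> tree_le ET r x z"
  using set_root_path_mono tree_le_iff by blast

lemma tree_le_common_upper: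
  assumes ac: "tree_le ET r a c" and bc: "tree_le ET r b c"
  shows "comparable_T ET r a b"
proof -
  have "tree_le ET r a b" if "height a \<le> height b" "tree_le ET r a c" "tree_le ET r b c" for a b
  proof -
    from that tree_le_nth have c: "c \<in> VT"
      and a: "height a < length (root_path c)" "root_path c ! height a = a"
      and b: "height b < length (root_path c)" "root_path c ! height b = b" by auto
    have "root_path b = take (Suc (height b)) (root_path c)"
      using root_path_take[OF c b(1)] b(2) by simp
    moreover have "a \<in> set (take (Suc (height b)) (root_path c))"
      using a that(1) by (metis in_set_conv_nth le_imp_less_Suc length_take min_less_iff_conj nth_take)
    ultimately show ?thesis using tree_le_iff tree_le_in that(3) by auto
  qed
  then show ?thesis unfolding comparable_T_def using ac bc nat_le_linear by blast
qed

end

section \<open>Connected sets of the graph connectoid\<close>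

lemma gconnected_path: "sym E \<Longrightarrow> is_path E p \<Longrightarrow> gconnected E (set p)"
  unfolding gconnected_def
proof (intro ballI)
  fix x y assume E: "sym E" "is_path E p" and "x \<in> set p" "y \<in> set p"
  then obtain i j where i: "i < length p" "p ! i = x" and j: "j < length p" "p ! j = y"
    by (auto simp: in_set_conv_nth)
  show "(x, y) \<in> (E \<inter> set p \<times> set p)\<^sup>*"
  proof (cases "i \<le> j")
    case True
    then show ?thesis using is_path_rtrancl_nth[OF E(2) order_refl True j(1)] i j by simp
  next
    case False
    then have "(y, x) \<in> (E \<inter> set p \<times> set p)\<^sup>*"
      using is_path_rtrancl_nth[OF E(2) order_refl, of j i] i j by simp
    then show ?thesis using sym_Restr_rtrancl[OF E(1)] by blast
  qed
qed

lemma graph_F_path: "sym E \<Longrightarrow> is_path E p \<Longrightarrow> set p \<subseteq> V \<Longrightarrow> set p \<in> graph_F V E"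
  using gconnected_path unfolding graph_F_def by auto

lemma graph_F_subset_graph_C: "graph_F V E \<subseteq> graph_C V E"
  unfolding graph_C_def conn_sets_def graph_F_def by blast

lemma graph_C_path: "sym E \<Longrightarrow> is_path E p \<Longrightarrow> set p \<subseteq> V \<Longrightarrow> set p \<in> graph_C V E"
  using graph_F_path graph_F_subset_graph_C by blast

lemma graph_C_subset: "C \<in> graph_C V E \<Longrightarrow> C \<subseteq> V"
  unfolding graph_C_def conn_sets_def by blast

lemma graph_C_ex_path:
  assumes "C \<in> graph_C V E" "x \<in> C" "y \<in> C"
  shows "\<exists>p. is_path E p \<and> hd p = x \<and> last p = y \<and> set p \<subseteq> C"
proof -
  obtain X where X: "X \<in> graph_F V E" "X \<subseteq> C" "x \<in> X" "y \<in> X"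
    using assms unfolding graph_C_def conn_sets_def by blast
  then have "(x, y) \<in> (E \<inter> X \<times> X)\<^sup>*" unfolding graph_F_def gconnected_def by blast
  then show ?thesis using rtrancl_imp_path[of x y E X] X by blast
qed

lemma ray_segment_path:
  assumes "inj f" "\<And>n. (f n, f (Suc n)) \<in> E"
  shows "is_path E (map f [i..<Suc (i + k)])"
  unfolding is_path_def
proof (intro conjI allI impI)
  show "distinct (map f [i..<Suc (i + k)])"
    using inj_on_subset[OF assms(1) subset_UNIV] by (simp add: distinct_map del: upt_Suc)
next
  fix m assume "Suc m < length (map f [i..<Suc (i + k)])"
  then show "(map f [i..<Suc (i + k)] ! m, map f [i..<Suc (i + k)] ! Suc m) \<in> E"
    using assms(2)[of "i + m"] by (simp add: nth_append del: upt_Suc)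
qed simp

lemma ray_segment_graph_F:
  assumes "sym E" "inj f" "\<And>n. (f n, f (Suc n)) \<in> E" "range f \<subseteq> V"
  shows "f ` {i..i + k} \<in> graph_F V E"
proof -
  define p where "p = map f [i..<Suc (i + k)]"
  have segment: "set p = f ` {i..i + k}"
    unfolding p_def by (simp only: set_map set_upt atLeastLessThanSuc_atLeastAtMost)
  have "is_path E p" unfolding p_def by (rule ray_segment_path[of f E, OF assms(2,3)])
  moreover have "set p \<subseteq> V" using assms(4) segment by auto
  ultimately have "set p \<in> graph_F V E" by (rule graph_F_path[OF assms(1)])
  then show ?thesis by (simp only: segment)
qed

lemma ray_necklace:
  assumes E: "sym E" "inj f" "\<And>n. (f n, f (Suc n)) \<in> E" "range f \<subseteq> V"
  shows "necklace (graph_C V E) (range f)"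
proof -
  define H where "H n = {f n, f (Suc n)}" for n
  have H_segment: "H n = f ` {n..n + 1}" for n
    unfolding H_def by (auto simp: le_Suc_eq)
  have "range f \<in> graph_C V E"
    unfolding graph_C_def conn_sets_def
  proof (intro CollectI conjI ballI)
    fix x y assume "x \<in> range f" "y \<in> range f"
    then obtain i j where "x = f i" "y = f j" by auto
    then have "x \<in> f ` {min i j..min i j + (max i j - min i j)}"
      "y \<in> f ` {min i j..min i j + (max i j - min i j)}" by auto
    moreover have "f ` {min i j..min i j + (max i j - min i j)} \<subseteq> range f" by blast
    ultimately show "\<exists>X\<in>graph_F V E. X \<subseteq> range f \<and> x \<in> X \<and> y \<in> X"
      using ray_segment_graph_F[of E f V "min i j" "max i j - min i j", OF E] by blast
  qed (use E(4) in blast)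
  moreover have "\<forall>n. finite (H n) \<and> H n \<in> graph_C V E"
  proof
    fix n
    have "H n \<in> graph_F V E" unfolding H_segment by (rule ray_segment_graph_F[of E f, OF E])
    then show "finite (H n) \<and> H n \<in> graph_C V E"
      using graph_F_subset_graph_C unfolding H_def by auto
  qed
  moreover have "range f = (\<Union>n. H n)" unfolding H_def by auto
  moreover have "\<forall>i j. H i \<inter> H j \<noteq> {} \<longleftrightarrow> i \<le> j + 1 \<and> j \<le> i + 1"
    unfolding H_def using E(2) by (auto simp: inj_eq)
  ultimately show ?thesis unfolding necklace_def by blast
qed

section \<open>Normal trees of a graph are normal trees of its connectoid\<close>

text \<open>
  Splitting a path at an inner vertex in T, the two lower bounds obtained by induction are
  comparable, and the smaller one works for the whole path.
\<close>
lemma normal_tree_graph_path_lower_bound: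
  assumes NT: "normal_tree_graph V E VT ET r"
  shows "is_path E p \<Longrightarrow> hd p \<in> VT \<Longrightarrow> last p \<in> VT \<Longrightarrow>
    \<exists>w\<in>set p. tree_le ET r w (hd p) \<and> tree_le ET r w (last p)"
proof (induction "length p" arbitrary: p rule: less_induct)
  case less
  interpret rtree VT ET r using NT unfolding normal_tree_graph_def by unfold_locales blast
  have p: "p \<noteq> []" using less.prems is_path_nonempty by blast
  show ?case
  proof (cases "\<exists>i. 0 < i \<and> i < length p - 1 \<and> p ! i \<in> VT")
    case True
    then obtain i where i: "0 < i" "i < length p - 1" "p ! i \<in> VT" by blast
    define p1 where "p1 = take (Suc i) p"
    define p2 where "p2 = drop i p"
    have P1: "is_path E p1" "hd p1 = hd p" "last p1 = p ! i" and P2: "is_path E p2"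
      "hd p2 = p ! i" "last p2 = last p"
      unfolding p1_def p2_def using is_path_split[OF less.prems(1)] i by auto
    have "length p1 < length p" "length p2 < length p" "set p1 \<subseteq> set p" "set p2 \<subseteq> set p"
      unfolding p1_def p2_def using i by (auto dest: in_set_takeD in_set_dropD)
    moreover obtain w1 where w1: "w1 \<in> set p1" "tree_le ET r w1 (hd p)" "tree_le ET r w1 (p ! i)"
      using less.hyps[OF _ P1(1)] P1 less.prems i calculation(1) by auto
    moreover obtain w2 where w2: "w2 \<in> set p2" "tree_le ET r w2 (p ! i)" "tree_le ET r w2 (last p)"
      using less.hyps[OF _ P2(1)] P2 less.prems i calculation(2) by auto
    ultimately have "w1 \<in> set p" "w2 \<in> set p" by auto
    have "comparable_T ET r w1 w2" using tree_le_common_upper w1(3) w2(2) by blast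
    then show ?thesis
      unfolding comparable_T_def using w1 w2 \<open>w1 \<in> set p\<close> \<open>w2 \<in> set p\<close> tree_le_trans by blast
  next
    case False
    show ?thesis
    proof (cases "length p \<ge> 2")
      case True
      with False less.prems NT have "comparable_T ET r (hd p) (last p)"
        unfolding normal_tree_graph_def by blast
      then show ?thesis
        unfolding comparable_T_def using tree_le_refl less.prems p by (metis hd_in_set last_in_set)
    next
      case False
      then have "length p = 1" using p by (cases p) (auto simp: Suc_le_eq)
      then have "hd p = last p" by (cases p) auto
      then show ?thesis using tree_le_refl less.prems p by (metis hd_in_set)
    qed
  qed
qed

lemma (in rtree) up_segment_graph_C:
  assumes "sym E" "ET \<subseteq> E" "VT \<subseteq> V" and uv: "tree_le ET r u v"
  shows "\<exists>C\<in>graph_C V E. u \<in> C \<and> v \<in> C \<and> C \<inter> down_open ET r u = {}"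
proof -
  from tree_le_nth[OF uv] have v: "v \<in> VT"
    and u: "height u < length (root_path v)" "root_path v ! height u = u" by auto
  define q where "q = drop (height u) (root_path v)"
  have "is_path ET q"
    unfolding q_def using root_path[OF v] u(1) by (simp add: is_path_drop)
  then have q: "is_path E q" "q \<noteq> []"
    using assms(2) by (simp_all add: is_path_mono is_path_nonempty)
  have "set q \<subseteq> V"
    using root_path_subset[OF v] assms(3) set_drop_subset[of "height u" "root_path v"]
    unfolding q_def by (meson order_trans)
  then have "set q \<in> graph_C V E" by (rule graph_C_path[OF assms(1) q(1)])
  moreover have "u \<in> set q" "v \<in> set q"
  proof -
    have "q ! 0 = u" "last q = v" using u root_path[OF v] unfolding q_def by simp_all
    then show "u \<in> set q" "v \<in> set q" using q(2) nth_mem[of 0 q] last_in_set[of q] by auto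
  qed
  moreover have "set q \<inter> down_open ET r u = {}"
  proof (rule ccontr)
    assume "set q \<inter> down_open ET r u \<noteq> {}"
    then obtain z where z: "z \<in> set q" "tree_le ET r z u" "z \<noteq> u"
      unfolding down_open_def by blast
    then obtain j where "j < length q" "q ! j = z" by (auto simp: in_set_conv_nth)
    then have "height z = height u + j" using height_nth[OF v, of "height u + j"] q_def by auto
    then show False using tree_le_height[OF z(2)] tree_le_height_eq[OF z(2)] z(3) by simp
  qed
  ultimately show ?thesis by blast
qed

lemma normal_tree_graph_imp_normal_tree_cn:
  assumes "sym E" and NT: "normal_tree_graph V E VT ET r"
  shows "normal_tree_cn V (graph_C V E) VT ET r"
proof -
  have VT: "rooted_tree VT ET r" "VT \<subseteq> V" "ET \<subseteq> E"
    using NT unfolding normal_tree_graph_def by blast+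
  interpret rtree VT ET r by unfold_locales (fact VT(1))
  have "\<exists>w\<in>C. tree_le ET r w u \<and> tree_le ET r w v"
    if C: "C \<in> graph_C V E" and u: "u \<in> C \<inter> VT" and v: "v \<in> C \<inter> VT" for C u v
  proof -
    obtain p where "is_path E p" "hd p = u" "last p = v" "set p \<subseteq> C"
      using graph_C_ex_path[OF C] u v by blast
    then show ?thesis
      using normal_tree_graph_path_lower_bound[OF NT, of p] u v by auto
  qed
  moreover have "\<exists>N. necklace (graph_C V E) N \<and> finite (range f - N)"
    if f: "rooted_ray ET r f" for f
  proof (intro exI conjI)
    show "necklace (graph_C V E) (range f)"
    proof (rule ray_necklace[OF assms(1)])
      show "inj f" "(f n, f (Suc n)) \<in> E" for n
        using f VT(3) unfolding rooted_ray_def by auto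
      have "f n \<in> VT" for n
        using f edges_subset unfolding rooted_ray_def by blast
      then show "range f \<subseteq> V" using VT(2) by blast
    qed
  qed simp
  moreover note up_segment_graph_C[OF assms(1) VT(3,2)]
  ultimately show ?thesis
    unfolding normal_tree_cn_def weak_normal_tree_def using VT(1,2) by auto
qed

section \<open>Trees given by a parent function\<close>

inductive ancestor :: "('a \<Rightarrow> 'a) \<Rightarrow> 'a \<Rightarrow> 'a \<Rightarrow> 'a \<Rightarrow> bool" for p r where
  ancestor_refl: "ancestor p r y y"
| ancestor_parent: "ancestor p r x (p y) \<Longrightarrow> y \<noteq> r \<Longrightarrow> ancestor p r x y"

lemma ancestor_iff: "ancestor p r x y \<longleftrightarrow> x = y \<or> y \<noteq> r \<and> ancestor p r x (p y)"
  by (blast elim: ancestor.cases intro: ancestor.intros)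

lemma ancestor_of_root: "ancestor p r x r \<Longrightarrow> x = r"
  by (cases rule: ancestor.cases) blast+

definition parent_edges :: "'a set \<Rightarrow> ('a \<Rightarrow> 'a) \<Rightarrow> 'a \<Rightarrow> ('a \<times> 'a) set" where
  "parent_edges A p r = {(x, p x) | x. x \<in> A \<and> x \<noteq> r} \<union> {(p x, x) | x. x \<in> A \<and> x \<noteq> r}"

lemma cycle_neighbours:
  assumes "is_path E xs" "(last xs, hd xs) \<in> E" "3 \<le> length xs" "m < length xs"
  obtains a b where "a < length xs" "b < length xs" "a \<noteq> b"
    "(xs ! m, xs ! a) \<in> E" "(xs ! b, xs ! m) \<in> E"
proof
  define n where "n = length xs"
  have "xs \<noteq> []" using assms(3) by auto
  then have xs: "hd xs = xs ! 0" "last xs = xs ! (n - 1)"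
    unfolding n_def by (simp_all add: hd_conv_nth last_conv_nth)
  have step: "(xs ! i, xs ! Suc i) \<in> E" if "Suc i < n" for i
    using assms(1) that unfolding is_path_def n_def by blast
  show "(if Suc m < n then Suc m else 0) < length xs" "(if m = 0 then n - 1 else m - 1) < length xs"
    "(if Suc m < n then Suc m else 0) \<noteq> (if m = 0 then n - 1 else m - 1)"
    using assms(3,4) unfolding n_def by auto
  show "(xs ! m, xs ! (if Suc m < n then Suc m else 0)) \<in> E"
  proof (cases "Suc m < n")
    case False
    then have "m = n - 1" using assms(4) unfolding n_def by simp
    then show ?thesis using assms(2) xs False by simp
  qed (simp add: step)
  show "(xs ! (if m = 0 then n - 1 else m - 1), xs ! m) \<in> E"
    using step[of "m - 1"] assms(2,4) xs unfolding n_def by auto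
qed

text \<open>
  The height function h witnesses that following parents from any vertex of A reaches the
  root r.
\<close>
locale parent_tree =
  fixes A :: "'a set" and p :: "'a \<Rightarrow> 'a" and h :: "'a \<Rightarrow> nat" and r :: 'a
  assumes root_in: "r \<in> A"
    and parent_in: "\<And>x. x \<in> A \<Longrightarrow> x \<noteq> r \<Longrightarrow> p x \<in> A"
    and height_parent: "\<And>x. x \<in> A \<Longrightarrow> x \<noteq> r \<Longrightarrow> h (p x) < h x"
begin

abbreviation PE :: "('a \<times> 'a) set" where
  "PE \<equiv> parent_edges A p r"

lemma ancestor_in: "ancestor p r x y \<Longrightarrow> y \<in> A \<Longrightarrow> x \<in> A"
  by (induction rule: ancestor.induct) (auto intro: parent_in)

lemma ancestor_height: "ancestor p r x y \<Longrightarrow> y \<in> A \<Longrightarrow> h x \<le> h y \<and> (x \<noteq> y \<longrightarrow> h x < h y)"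
proof (induction rule: ancestor.induct)
  case (ancestor_parent x y)
  then show ?case using parent_in height_parent by fastforce
qed simp

lemma parent_edges_cases:
  "(x, y) \<in> PE \<Longrightarrow> (x \<in> A \<and> x \<noteq> r \<and> y = p x) \<or> (y \<in> A \<and> y \<noteq> r \<and> x = p y)"
  unfolding parent_edges_def by auto

lemma parent_edge_down: "(x, z) \<in> PE \<Longrightarrow> h z \<le> h x \<Longrightarrow> z = p x"
  using parent_edges_cases height_parent by fastforce

lemma sym_parent_edges: "sym PE"
  unfolding parent_edges_def sym_def by auto

lemma root_rtrancl: "y \<in> A \<Longrightarrow> (r, y) \<in> PE\<^sup>*"
proof (induction "h y" arbitrary: y rule: less_induct)
  case less
  show ?case
  proof (cases "y = r")
    case False
    then have "(r, p y) \<in> PE\<^sup>*" using less height_parent parent_in by blast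
    moreover have "(p y, y) \<in> PE" using less.prems False unfolding parent_edges_def by blast
    ultimately show ?thesis by (rule rtrancl_into_rtrancl)
  qed simp
qed

lemma no_cycle: "\<not> (\<exists>xs. length xs \<ge> 3 \<and> is_path PE xs \<and> (last xs, hd xs) \<in> PE)"
proof
  assume "\<exists>xs. length xs \<ge> 3 \<and> is_path PE xs \<and> (last xs, hd xs) \<in> PE"
  then obtain xs where xs: "length xs \<ge> 3" "is_path PE xs" "(last xs, hd xs) \<in> PE" by blast
  have "Max (h ` set xs) \<in> h ` set xs" using xs(1) by (intro Max_in) auto
  then obtain m where m: "m < length xs" "h (xs ! m) = Max (h ` set xs)"
    by (auto simp: in_set_conv_nth)
  have highest: "h (xs ! i) \<le> h (xs ! m)" if "i < length xs" for i
    using m(2) that by simp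
  obtain a b where ab: "a < length xs" "b < length xs" "a \<noteq> b"
    "(xs ! m, xs ! a) \<in> PE" "(xs ! b, xs ! m) \<in> PE"
    using cycle_neighbours[OF xs(2,3,1) m(1)] by blast
  text \<open>Both cycle neighbours of a highest vertex must be its parent.\<close>
  have "xs ! a = xs ! b"
    using parent_edge_down[OF ab(4) highest[OF ab(1)]]
      parent_edge_down[OF symD[OF sym_parent_edges ab(5)] highest[OF ab(2)]] by simp
  then show False
    using ab xs(2) nth_eq_iff_index_eq unfolding is_path_def by blast
qed

lemma rooted_tree: "rooted_tree A PE r"
  unfolding rooted_tree_def is_tree_def
proof (intro conjI ballI root_in no_cycle sym_parent_edges)
  show "PE \<subseteq> A \<times> A" unfolding parent_edges_def using parent_in by auto
  show "irrefl PE"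
    unfolding irrefl_def using parent_edges_cases height_parent by (metis less_irrefl)
  fix x y assume "x \<in> A" "y \<in> A"
  then have "(x, r) \<in> PE\<^sup>*" "(r, y) \<in> PE\<^sup>*"
    using root_rtrancl symD[OF sym_rtrancl[OF sym_parent_edges]] by blast+
  then show "(x, y) \<in> PE\<^sup>*" by (rule rtrancl_trans)
qed

lemma ancestor_path:
  "y \<in> A \<Longrightarrow> \<exists>q. is_path PE q \<and> hd q = r \<and> last q = y \<and> set q = {x. ancestor p r x y}"
proof (induction "h y" arbitrary: y rule: less_induct)
  case less
  show ?case
  proof (cases "y = r")
    case True
    then show ?thesis using ancestor_of_root by (intro exI[of _ "[r]"]) (auto intro: ancestor_refl)
  next
    case False
    then obtain q where q: "is_path PE q" "hd q = r" "last q = p y"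
      "set q = {x. ancestor p r x (p y)}"
      using less height_parent parent_in by blast
    have "y \<notin> set q"
      using q(4) ancestor_height[of y "p y"] parent_in height_parent less.prems False by fastforce
    moreover have "(last q, y) \<in> PE" using less.prems False q(3) unfolding parent_edges_def by blast
    ultimately have "is_path PE (q @ [y])" using is_path_snoc[OF q(1)] by blast
    moreover have "hd (q @ [y]) = r" using q(1,2) is_path_nonempty by fastforce
    moreover have "set (q @ [y]) = {x. ancestor p r x y}"
      using q(4) ancestor_iff[of p r _ y] False by auto
    ultimately show ?thesis by (intro exI[of _ "q @ [y]"]) simp
  qed
qed

lemma tree_le_parent_edges: "tree_le PE r x y \<longleftrightarrow> y \<in> A \<and> ancestor p r x y"
proof -
  interpret rtree A PE r by unfold_locales (fact rooted_tree)
  show ?thesis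
  proof (cases "y \<in> A")
    case True
    then obtain q where q: "is_path PE q" "hd q = r" "last q = y" "set q = {x. ancestor p r x y}"
      using ancestor_path by blast
    then show ?thesis using tree_le_iff root_path_eq[OF q(1-3)] True by simp
  qed (simp add: tree_le_iff)
qed

end

section \<open>Components of an induced subgraph\<close>

definition component :: "('a \<times> 'a) set \<Rightarrow> 'a set \<Rightarrow> 'a \<Rightarrow> 'a set" where
  "component E X s = {x. (s, x) \<in> (E \<inter> X \<times> X)\<^sup>*}"

lemma component_subset: "s \<in> X \<Longrightarrow> component E X s \<subseteq> X"
  unfolding component_def using Restr_rtrancl_in by fast

lemma self_in_component: "s \<in> component E X s"
  unfolding component_def by simp

lemma component_rtrancl:
  "x \<in> component E X s \<Longrightarrow> (x, y) \<in> (E \<inter> X \<times> X)\<^sup>* \<Longrightarrow> y \<in> component E X s"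
  unfolding component_def by (simp add: rtrancl_trans)

lemma component_edge:
  "x \<in> component E X s \<Longrightarrow> (x, y) \<in> E \<Longrightarrow> x \<in> X \<Longrightarrow> y \<in> X \<Longrightarrow> y \<in> component E X s"
  using component_rtrancl[of x E X s y] by blast

lemma component_sym: "sym E \<Longrightarrow> x \<in> component E X s \<Longrightarrow> s \<in> component E X x"
  unfolding component_def using sym_Restr_rtrancl by fast

lemma component_eq:
  assumes "sym E" "x \<in> component E X s"
  shows "component E X x = component E X s"
proof -
  have "s \<in> component E X x" using component_sym[OF assms] .
  then show ?thesis using component_rtrancl[OF assms(2)] component_rtrancl[of s E X x]
    unfolding component_def[of E X s] component_def[of E X x] by blast
qed

lemma component_restrict:
  assumes "(x, y) \<in> (E \<inter> X \<times> X)\<^sup>*" "x \<in> component E X s"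
  shows "(x, y) \<in> (E \<inter> component E X s \<times> component E X s)\<^sup>*"
  using assms
proof (induction rule: rtrancl_induct)
  case (step y z)
  have "y \<in> component E X s" using component_rtrancl[OF step.prems step.hyps(1)] .
  moreover have "z \<in> component E X s"
    using component_rtrancl[OF calculation r_into_rtrancl[OF step.hyps(2)]] .
  ultimately have "(y, z) \<in> E \<inter> component E X s \<times> component E X s" using step.hyps(2) by blast
  with step.IH[OF step.prems] show ?case ..
qed simp

lemma component_ex_path:
  assumes "sym E" "x \<in> component E X s" "y \<in> component E X s"
  shows "\<exists>c. is_path E c \<and> hd c = x \<and> last c = y \<and> set c \<subseteq> component E X s"
proof -
  have "y \<in> component E X x" using assms(3) by (simp only: component_eq[OF assms(1,2)])
  then have "(x, y) \<in> (E \<inter> X \<times> X)\<^sup>*" unfolding component_def by simp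
  then have "(x, y) \<in> (E \<inter> component E X s \<times> component E X s)\<^sup>*"
    by (rule component_restrict[OF _ assms(2)])
  then show ?thesis by (rule rtrancl_imp_path[OF _ assms(2)])
qed

lemma path_stays_in_component:
  assumes "is_path E P" "P ! 0 \<in> component E X s" "k \<le> length P" "\<forall>i<k. P ! i \<in> X"
  shows "i < k \<Longrightarrow> P ! i \<in> component E X s"
proof (induction i)
  case (Suc i)
  have "P ! i \<in> component E X s" using Suc by simp
  moreover have "(P ! i, P ! Suc i) \<in> E" using assms(1,3) Suc.prems unfolding is_path_def by simp
  moreover have "P ! i \<in> X" "P ! Suc i \<in> X" using Suc.prems assms(4) by auto
  ultimately show ?case by (rule component_edge)
qed (use assms(2) in simp)

section \<open>Normal trees of a graph from weak normal trees of its connectoid\<close>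

locale weak_normal_graph_tree =
  fixes V :: "'a set" and E :: "('a \<times> 'a) set" and VT :: "'a set" and ET :: "('a \<times> 'a) set"
    and r :: 'a
  assumes edges_in: "E \<subseteq> V \<times> V" and sym_E: "sym E"
    and weak_normal: "weak_normal_tree V (graph_C V E) VT ET r"
begin

sublocale rtree VT ET r
  using weak_normal unfolding weak_normal_tree_def by unfold_locales blast

lemma tree_subset: "VT \<subseteq> V"
  using weak_normal unfolding weak_normal_tree_def by blast

lemma common_lower_bound:
  "C \<in> graph_C V E \<Longrightarrow> u \<in> C \<inter> VT \<Longrightarrow> v \<in> C \<inter> VT \<Longrightarrow> \<not> comparable_T ET r u v \<Longrightarrow>
    \<exists>w\<in>C. tree_le ET r w u \<and> tree_le ET r w v"
  using weak_normal unfolding weak_normal_tree_def by blast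

lemma rtrancl_to_root:
  assumes "s \<in> VT"
  shows "(s, r) \<in> (E \<inter> V \<times> V)\<^sup>*"
proof -
  obtain C where C: "C \<in> graph_C V E" "r \<in> C" "s \<in> C"
    using weak_normal tree_le_root[OF assms] root_in assms unfolding weak_normal_tree_def by blast
  then obtain c where "is_path E c" "hd c = s" "last c = r" "set c \<subseteq> V"
    using graph_C_ex_path[OF C(1,3,2)] graph_C_subset[OF C(1)] by blast
  then show ?thesis using is_path_rtrancl[of E c V] by simp
qed

definition ancestor_comparable :: "('a \<Rightarrow> 'a) \<Rightarrow> 'a \<Rightarrow> 'a \<Rightarrow> bool" where
  "ancestor_comparable p x y \<longleftrightarrow> ancestor p r x y \<or> ancestor p r y x"

definition normal_parent :: "'a set \<Rightarrow> ('a \<Rightarrow> 'a) \<Rightarrow> bool" where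
  "normal_parent A p \<longleftrightarrow> (\<forall>P. is_path E P \<and> 2 \<le> length P \<and> hd P \<in> A \<and> last P \<in> A
      \<and> (\<forall>i. 0 < i \<and> i < length P - 1 \<longrightarrow> P ! i \<notin> A) \<longrightarrow> ancestor_comparable p (hd P) (last P))"

text \<open>The invariant of the n-th stage T_n = (A, p), with h witnessing well-foundedness of p.\<close>
definition stage_inv :: "nat \<Rightarrow> 'a set \<Rightarrow> ('a \<Rightarrow> 'a) \<Rightarrow> ('a \<Rightarrow> nat) \<Rightarrow> bool" where
  "stage_inv n A p h \<longleftrightarrow> r \<in> A \<and> A \<subseteq> V
     \<and> (\<forall>x\<in>A. x \<noteq> r \<longrightarrow> p x \<in> A \<and> h (p x) < h x \<and> (x, p x) \<in> E)
     \<and> normal_parent A p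
     \<and> (\<forall>K. K \<subseteq> A \<and> (\<forall>a\<in>K. \<forall>b\<in>K. ancestor_comparable p a b) \<longrightarrow> finite K)
     \<and> (\<forall>x\<in>VT. height x \<le> n \<longrightarrow> x \<in> A)"

abbreviation outside :: "'a set \<Rightarrow> 'a \<Rightarrow> 'a set" where
  "outside A s \<equiv> component E (V - A) s"

definition neighbours :: "'a set \<Rightarrow> 'a \<Rightarrow> 'a set" where
  "neighbours A s = {b \<in> A. \<exists>d\<in>outside A s. (d, b) \<in> E}"

definition missing :: "nat \<Rightarrow> 'a set \<Rightarrow> 'a set" where
  "missing n A = {s \<in> VT. height s = Suc n \<and> s \<notin> A}"

lemma stage_inv_0: "stage_inv 0 {r} (\<lambda>x. x) (\<lambda>_. 0)"
  unfolding stage_inv_def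
proof (intro conjI ballI allI impI)
  show "r \<in> {r}" "{r} \<subseteq> V" using root_in tree_subset by auto
  show "normal_parent {r} (\<lambda>x. x)"
    unfolding normal_parent_def ancestor_comparable_def by (auto intro: ancestor_refl)
  show "finite K" if "K \<subseteq> {r} \<and> (\<forall>a\<in>K. \<forall>b\<in>K. ancestor_comparable (\<lambda>x. x) a b)" for K
    using that finite_subset by blast
  show "x \<in> {r}" if "x \<in> VT" "height x \<le> 0" for x
    using tree_le_height_eq[OF tree_le_root[OF that(1)]] height_root that(2) by simp
qed simp_all

end

locale extension_step = weak_normal_graph_tree +
  fixes n :: nat and A :: "'a set" and p :: "'a \<Rightarrow> 'a" and h :: "'a \<Rightarrow> nat"
  assumes inv: "stage_inv n A p h"
begin

lemma root_in_A: "r \<in> A" and A_subset: "A \<subseteq> V"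
  and parent: "\<And>x. x \<in> A \<Longrightarrow> x \<noteq> r \<Longrightarrow> p x \<in> A \<and> h (p x) < h x \<and> (x, p x) \<in> E"
  and normal: "normal_parent A p"
  and finite_chains: "\<And>K. K \<subseteq> A \<Longrightarrow> \<forall>a\<in>K. \<forall>b\<in>K. ancestor_comparable p a b \<Longrightarrow> finite K"
  and low_vertices_in: "\<And>x. x \<in> VT \<Longrightarrow> height x \<le> n \<Longrightarrow> x \<in> A"
  using inv unfolding stage_inv_def by blast+

sublocale pt: parent_tree A p h r
  by unfold_locales (use root_in_A parent in blast)+

lemma missingD: "s \<in> missing n A \<Longrightarrow> s \<in> VT \<and> s \<in> V - A \<and> height s = Suc n"
  unfolding missing_def using tree_subset by auto

text \<open>Any two neighbours of a component of G - A are the ends of an A-path through it.\<close>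
lemma neighbours_chain:
  assumes s: "s \<in> V - A" and b: "b \<in> neighbours A s" "b' \<in> neighbours A s"
  shows "ancestor_comparable p b b'"
proof (cases "b = b'")
  case True
  then show ?thesis unfolding ancestor_comparable_def by (simp add: ancestor_refl)
next
  case False
  obtain d where d: "d \<in> outside A s" "(d, b) \<in> E" "b \<in> A"
    using b(1) unfolding neighbours_def by blast
  obtain d' where d': "d' \<in> outside A s" "(d', b') \<in> E" "b' \<in> A"
    using b(2) unfolding neighbours_def by blast
  obtain c where c: "is_path E c" "hd c = d" "last c = d'" "set c \<subseteq> outside A s"
    using component_ex_path[OF sym_E d(1) d'(1)] by blast
  have c_out: "set c \<subseteq> V - A" using c(4) component_subset[OF s] by (rule subset_trans)
  have "is_path E (c @ [b'])"
    using is_path_snoc[OF c(1)] c(3) c_out d'(2,3) by auto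
  moreover have "b \<notin> set (c @ [b'])" using c_out d(3) False by auto
  moreover have "(b, hd (c @ [b'])) \<in> E"
    using symD[OF sym_E d(2)] c(2) is_path_nonempty[OF c(1)] by simp
  ultimately have P: "is_path E (b # c @ [b'])" by (rule is_path_Cons)
  have "(b # c @ [b']) ! i \<notin> A" if "0 < i" "i < length (b # c @ [b']) - 1" for i
  proof -
    have "(b # c @ [b']) ! i = c ! (i - 1)" "i - 1 < length c"
      using that by (auto simp: nth_Cons nth_append split: nat.splits)
    then show ?thesis using c_out nth_mem by fastforce
  qed
  moreover have "2 \<le> length (b # c @ [b'])" "hd (b # c @ [b']) \<in> A" "last (b # c @ [b']) \<in> A"
    using d(3) d'(3) by simp_all
  ultimately have "ancestor_comparable p (hd (b # c @ [b'])) (last (b # c @ [b']))"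
    using normal P unfolding normal_parent_def by blast
  then show ?thesis by simp
qed

definition attaches :: "'a \<Rightarrow> 'a \<Rightarrow> 'a list \<Rightarrow> bool" where
  "attaches s m q \<longleftrightarrow> m \<in> A \<and> (\<forall>b\<in>neighbours A s. ancestor p r b m) \<and> is_path E q
     \<and> (hd q, m) \<in> E \<and> last q = s \<and> set q \<subseteq> outside A s"

text \<open>
  The neighbours of the component of s form a finite chain of T_n, so there is a highest one;
  attach to it a path through the component ending in s.
\<close>
lemma ex_attaches:
  assumes s: "s \<in> missing n A"
  shows "\<exists>m q. attaches s m q"
proof -
  have s_out: "s \<in> V - A" using missingD[OF s] by auto
  obtain d c where "(s, d) \<in> (E \<inter> (V - A) \<times> (V - A))\<^sup>*" "(d, c) \<in> E" "c \<in> A"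
    using first_exit[OF rtrancl_to_root s_out root_in_A] missingD[OF s] by blast
  then have "c \<in> neighbours A s" unfolding neighbours_def component_def by blast
  have chain: "\<forall>a\<in>neighbours A s. \<forall>b\<in>neighbours A s. ancestor_comparable p a b"
    using neighbours_chain[OF s_out] by blast
  moreover have nb_A: "neighbours A s \<subseteq> A" unfolding neighbours_def by blast
  ultimately have fin: "finite (neighbours A s)" by (rule finite_chains[rotated])
  have "Max (h ` neighbours A s) \<in> h ` neighbours A s"
    using fin \<open>c \<in> neighbours A s\<close> by (intro Max_in) auto
  then obtain m where m: "m \<in> neighbours A s" "\<forall>b\<in>neighbours A s. h b \<le> h m"
    using fin by (metis Max_ge finite_imageI image_eqI imageE)
  have "ancestor p r b m" if "b \<in> neighbours A s" for b
    using chain m that nb_A pt.ancestor_height unfolding ancestor_comparable_def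
    by (metis leD subsetD)
  moreover obtain d' where d': "d' \<in> outside A s" "(d', m) \<in> E"
    using m(1) unfolding neighbours_def by blast
  moreover obtain q where "is_path E q" "hd q = d'" "last q = s" "set q \<subseteq> outside A s"
    using component_ex_path[OF sym_E d'(1) self_in_component] by blast
  ultimately show ?thesis unfolding attaches_def using m(1) nb_A by blast
qed

definition anchor :: "'a \<Rightarrow> 'a" where
  "anchor s = fst (SOME (m, q). attaches s m q)"

definition branch :: "'a \<Rightarrow> 'a list" where
  "branch s = snd (SOME (m, q). attaches s m q)"

lemma attaches_anchor_branch:
  assumes "s \<in> missing n A"
  shows "attaches s (anchor s) (branch s)"
proof -
  obtain m q where "attaches s m q" using ex_attaches[OF assms] by blast
  then have "case (SOME (m, q). attaches s m q) of (m, q) \<Rightarrow> attaches s m q"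
    by (intro someI[of "\<lambda>(m, q). attaches s m q" "(m, q)"]) simp
  then show ?thesis unfolding anchor_def branch_def by (simp add: case_prod_beta)
qed

lemma anchor_in: "s \<in> missing n A \<Longrightarrow> anchor s \<in> A"
  and anchor_above: "s \<in> missing n A \<Longrightarrow> b \<in> neighbours A s \<Longrightarrow> ancestor p r b (anchor s)"
  and branch_path: "s \<in> missing n A \<Longrightarrow> is_path E (branch s)"
  and branch_hd: "s \<in> missing n A \<Longrightarrow> (hd (branch s), anchor s) \<in> E"
  and branch_last: "s \<in> missing n A \<Longrightarrow> last (branch s) = s"
  and branch_outside: "s \<in> missing n A \<Longrightarrow> set (branch s) \<subseteq> outside A s"
  using attaches_anchor_branch unfolding attaches_def by blast+

lemma branch_not_in_A:
  assumes "s \<in> missing n A" "x \<in> set (branch s)"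
  shows "x \<notin> A"
proof -
  have "x \<in> outside A s" using branch_outside[OF assms(1)] assms(2) by blast
  then show ?thesis using component_subset[of s "V - A" E] missingD[OF assms(1)] by blast
qed

lemma branch_nth_not_in_A: "s \<in> missing n A \<Longrightarrow> i < length (branch s) \<Longrightarrow> branch s ! i \<notin> A"
  by (meson branch_not_in_A nth_mem)

text \<open>
  This is where weak normality enters: a connected set containing two missing vertices
  contains a common lower bound, which has height at most n and therefore lies in A.
\<close>
lemma outside_missing_disjoint:
  assumes s: "s \<in> missing n A" and s': "s' \<in> missing n A"
    and x: "x \<in> outside A s" "x \<in> outside A s'"
  shows "s = s'"
proof (rule ccontr)
  assume "s \<noteq> s'"
  have S: "s \<in> VT" "s \<in> V - A" "height s = Suc n" using missingD[OF s] by auto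
  have S': "s' \<in> VT" "s' \<in> V - A" "height s' = Suc n" using missingD[OF s'] by auto
  have incomparable: "\<not> comparable_T ET r s s'"
    unfolding comparable_T_def using tree_le_height_eq[of s s'] tree_le_height_eq[of s' s]
      S(3) S'(3) \<open>s \<noteq> s'\<close> by auto
  have "outside A s = outside A s'"
    using component_eq[OF sym_E x(1)] component_eq[OF sym_E x(2)] by simp
  then have "s \<in> outside A s'" using self_in_component[of s E "V - A"] by simp
  then obtain c where c: "is_path E c" "hd c = s" "last c = s'" "set c \<subseteq> outside A s'"
    using component_ex_path[OF sym_E _ self_in_component] by blast
  have c_out: "set c \<subseteq> V - A" using c(4) component_subset[OF S'(2)] by blast
  have C: "set c \<in> graph_C V E" using graph_C_path[OF sym_E c(1)] c_out by blast
  have "s \<in> set c" "s' \<in> set c" using c(2,3) is_path_nonempty[OF c(1)] by auto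
  then obtain w where w: "w \<in> set c" "tree_le ET r w s" "tree_le ET r w s'"
    using common_lower_bound[OF C _ _ incomparable] S(1) S'(1) by blast
  have "w \<noteq> s" using w(3) incomparable unfolding comparable_T_def by blast
  then have "height w < height s"
    using tree_le_height[OF w(2)] tree_le_height_eq[OF w(2)] by fastforce
  then have "w \<in> A" using low_vertices_in[of w] tree_le_in[OF w(2)] S(3) by simp
  then show False using w(1) c_out by blast
qed

lemma branch_unique:
  "s \<in> missing n A \<Longrightarrow> s' \<in> missing n A \<Longrightarrow> x \<in> set (branch s) \<Longrightarrow> x \<in> set (branch s') \<Longrightarrow>
    s = s'"
  using outside_missing_disjoint branch_outside by (meson subsetD)

lemma distinct_branch: "s \<in> missing n A \<Longrightarrow> distinct (branch s)"
  using branch_path unfolding is_path_def by blast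

end

context extension_step
begin

definition new_vertices :: "'a set" where
  "new_vertices = (\<Union>s\<in>missing n A. set (branch s))"

definition A' :: "'a set" where
  "A' = A \<union> new_vertices"

definition branch_of :: "'a \<Rightarrow> 'a" where
  "branch_of x = (SOME s. s \<in> missing n A \<and> x \<in> set (branch s))"

definition branch_pos :: "'a \<Rightarrow> nat" where
  "branch_pos x = (THE i. i < length (branch (branch_of x)) \<and> branch (branch_of x) ! i = x)"

text \<open>Each branch hangs from its anchor, its vertices numbered upwards from there.\<close>
definition p' :: "'a \<Rightarrow> 'a" where
  "p' x = (if x \<in> A then p x
     else if branch_pos x = 0 then anchor (branch_of x) else branch (branch_of x) ! (branch_pos x - 1))"

definition h' :: "'a \<Rightarrow> nat" where
  "h' x = (if x \<in> A then h x else h (anchor (branch_of x)) + Suc (branch_pos x))"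

lemma new_vertexE:
  assumes "x \<in> new_vertices"
  obtains s i where "s \<in> missing n A" "i < length (branch s)" "x = branch s ! i"
  using assms unfolding new_vertices_def by (auto simp: in_set_conv_nth)

lemma branch_of_pos:
  assumes s: "s \<in> missing n A" and i: "i < length (branch s)"
  shows "branch_of (branch s ! i) = s" "branch_pos (branch s ! i) = i"
proof -
  have "\<exists>s'. s' \<in> missing n A \<and> branch s ! i \<in> set (branch s')" using s i by auto
  then have "branch_of (branch s ! i) \<in> missing n A \<and>
      branch s ! i \<in> set (branch (branch_of (branch s ! i)))"
    unfolding branch_of_def by (rule someI_ex)
  then show of: "branch_of (branch s ! i) = s" using branch_unique s i by (meson nth_mem)
  show "branch_pos (branch s ! i) = i"
    unfolding branch_pos_def of
  proof (rule the_equality)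
    fix j assume "j < length (branch s) \<and> branch s ! j = branch s ! i"
    then show "j = i" using distinct_branch[OF s] i nth_eq_iff_index_eq by blast
  qed (use i in simp)
qed

lemma p'_branch:
  assumes "s \<in> missing n A" "i < length (branch s)"
  shows "p' (branch s ! i) = (if i = 0 then anchor s else branch s ! (i - 1))"
    and "h' (branch s ! i) = h (anchor s) + Suc i"
  unfolding p'_def h'_def using branch_of_pos[OF assms] branch_nth_not_in_A[OF assms] by auto

lemma p'_old: "x \<in> A \<Longrightarrow> p' x = p x" and h'_old: "x \<in> A \<Longrightarrow> h' x = h x"
  unfolding p'_def h'_def by simp_all

lemma ancestor_p'_old: "y \<in> A \<Longrightarrow> ancestor p' r x y \<longleftrightarrow> ancestor p r x y"
proof
  show "ancestor p r x y" if "ancestor p' r x y" "y \<in> A"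
    using that
  proof (induction rule: ancestor.induct)
    case (ancestor_parent x y)
    then have "p' y = p y" "p y \<in> A" using p'_old parent by auto
    then show ?case using ancestor_parent ancestor.ancestor_parent by simp
  qed (rule ancestor_refl)
  show "ancestor p' r x y" if "ancestor p r x y" "y \<in> A"
    using that
  proof (induction rule: ancestor.induct)
    case (ancestor_parent x y)
    then have "p' y = p y" "p y \<in> A" using p'_old parent by auto
    then show ?case using ancestor_parent ancestor.ancestor_parent[of p' r x y] by simp
  qed (rule ancestor_refl)
qed

lemma ancestor_p'_branch:
  assumes s: "s \<in> missing n A"
  shows "i < length (branch s) \<Longrightarrow>
    ancestor p' r x (branch s ! i) \<longleftrightarrow> (\<exists>j\<le>i. x = branch s ! j) \<or> ancestor p r x (anchor s)"
proof (induction i)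
  case 0
  have "branch s ! 0 \<noteq> r" using branch_nth_not_in_A[OF s 0] root_in_A by auto
  then have "ancestor p' r x (branch s ! 0) \<longleftrightarrow> x = branch s ! 0 \<or> ancestor p' r x (anchor s)"
    using ancestor_iff[of p' r x "branch s ! 0"] p'_branch(1)[OF s 0] by simp
  also have "\<dots> \<longleftrightarrow> x = branch s ! 0 \<or> ancestor p r x (anchor s)"
    using ancestor_p'_old[OF anchor_in[OF s]] by simp
  finally show ?case by simp
next
  case (Suc i)
  have "branch s ! Suc i \<noteq> r" using branch_nth_not_in_A[OF s Suc.prems] root_in_A by auto
  then have "ancestor p' r x (branch s ! Suc i) \<longleftrightarrow>
      x = branch s ! Suc i \<or> ancestor p' r x (branch s ! i)"
    using ancestor_iff[of p' r x "branch s ! Suc i"] p'_branch(1)[OF s Suc.prems] by simp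
  also have "\<dots> \<longleftrightarrow> x = branch s ! Suc i \<or> (\<exists>j\<le>i. x = branch s ! j) \<or> ancestor p r x (anchor s)"
    using Suc.IH Suc.prems by simp
  also have "\<dots> \<longleftrightarrow> (\<exists>j\<le>Suc i. x = branch s ! j) \<or> ancestor p r x (anchor s)"
    by (auto simp: le_Suc_eq)
  finally show ?case .
qed

lemma branch_outside_nth: "s \<in> missing n A \<Longrightarrow> i < length (branch s) \<Longrightarrow> branch s ! i \<in> outside A s"
  using branch_outside nth_mem by blast

lemma path_from_branch_stays_outside:
  assumes s: "s \<in> missing n A" and i: "i < length (branch s)" and P: "is_path E P"
    and hd: "hd P = branch s ! i" and avoids: "\<forall>j<k. P ! j \<notin> A" and k: "k \<le> length P"
  shows "j < k \<Longrightarrow> P ! j \<in> outside A s"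
proof (rule path_stays_in_component[OF P _ k])
  have P_ne: "P \<noteq> []" using is_path_nonempty[OF P] .
  then show "P ! 0 \<in> outside A s" using hd branch_outside_nth[OF s i] by (simp add: hd_conv_nth)
  have "set P \<subseteq> V"
    using is_path_subset[OF P edges_in] hd branch_outside_nth[OF s i]
      component_subset[of s "V - A" E] missingD[OF s] by auto
  then show "\<forall>j<k. P ! j \<in> V - A" using avoids k by auto
qed

text \<open>
  An A'-path from a new vertex to an old one leaves the branch's component only at its last
  vertex, which is therefore a neighbour of that component, hence below its anchor.
\<close>
lemma A'_path_new_old:
  assumes s: "s \<in> missing n A" and i: "i < length (branch s)"
    and P: "is_path E P" "2 \<le> length P" "hd P = branch s ! i" "last P \<in> A"
    and inner: "\<forall>j. 0 < j \<and> j < length P - 1 \<longrightarrow> P ! j \<notin> A'"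
  shows "ancestor p' r (last P) (hd P)"
proof -
  have P_ne: "P \<noteq> []" using P(2) by auto
  have "\<forall>j<length P - 1. P ! j \<notin> A"
  proof (intro allI impI)
    fix j assume j: "j < length P - 1"
    show "P ! j \<notin> A"
    proof (cases "j = 0")
      case True
      then show ?thesis using P(3) P_ne branch_nth_not_in_A[OF s i] by (simp add: hd_conv_nth)
    next
      case False
      then show ?thesis using inner j unfolding A'_def by simp
    qed
  qed
  from path_from_branch_stays_outside[OF s i P(1,3) this, of "length P - 2"]
  have "P ! (length P - 2) \<in> outside A s" using P(2) by simp
  moreover have "(P ! (length P - 2), last P) \<in> E"
  proof -
    have "Suc (length P - 2) = length P - 1" "Suc (length P - 2) < length P" using P(2) by auto
    then show ?thesis
      using P(1) P_ne unfolding is_path_def by (metis last_conv_nth)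
  qed
  ultimately have "last P \<in> neighbours A s" unfolding neighbours_def using P(4) by blast
  then have "ancestor p r (last P) (anchor s)" by (rule anchor_above[OF s])
  then show ?thesis using ancestor_p'_branch[OF s i] P(3) by simp
qed

text \<open>An A'-path between new vertices stays in one component, so it joins two vertices
  of the same branch.\<close>
lemma A'_path_new_new:
  assumes s: "s \<in> missing n A" "i < length (branch s)"
    and s': "s' \<in> missing n A" "j < length (branch s')"
    and P: "is_path E P" "hd P = branch s ! i" "last P = branch s' ! j"
    and inner: "\<forall>k. 0 < k \<and> k < length P - 1 \<longrightarrow> P ! k \<notin> A'"
  shows "ancestor_comparable p' (hd P) (last P)"
proof -
  have P_ne: "P \<noteq> []" using is_path_nonempty[OF P(1)] .
  have "\<forall>k<length P. P ! k \<notin> A"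
  proof (intro allI impI)
    fix k assume k: "k < length P"
    show "P ! k \<notin> A"
    proof (cases "k = 0 \<or> k = length P - 1")
      case True
      then show ?thesis
        using P(2,3) P_ne branch_nth_not_in_A[OF s] branch_nth_not_in_A[OF s']
        by (auto simp: hd_conv_nth last_conv_nth)
    next
      case False
      then have "0 < k \<and> k < length P - 1" using k by auto
      then show ?thesis using inner unfolding A'_def by simp
    qed
  qed
  from path_from_branch_stays_outside[OF s P(1,2) this, of "length P - 1"]
  have "last P \<in> outside A s" using P_ne by (simp add: last_conv_nth)
  moreover have "last P \<in> outside A s'" using branch_outside_nth[OF s'] P(3) by simp
  ultimately have "s = s'" by (rule outside_missing_disjoint[OF s(1) s'(1)])
  then have "ancestor p' r (hd P) (last P) \<or> ancestor p' r (last P) (hd P)"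
    using ancestor_p'_branch[OF s'] ancestor_p'_branch[OF s] s P(2,3) nat_le_linear[of i j] by auto
  then show ?thesis unfolding ancestor_comparable_def .
qed

lemma normal_parent_A': "normal_parent A' p'"
  unfolding normal_parent_def
proof (intro allI impI, elim conjE)
  fix P assume P: "is_path E P" "2 \<le> length P" "hd P \<in> A'" "last P \<in> A'"
    and inner: "\<forall>i. 0 < i \<and> i < length P - 1 \<longrightarrow> P ! i \<notin> A'"
  have P_ne: "P \<noteq> []" using P(2) by auto
  have rev: "is_path E (rev P)" "2 \<le> length (rev P)" "hd (rev P) = last P" "last (rev P) = hd P"
    using is_path_rev[OF sym_E P(1)] P(2) P_ne by (simp_all add: hd_rev last_rev)
  consider "hd P \<in> A" "last P \<in> A" | "hd P \<in> A" "last P \<in> new_vertices"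
    | "hd P \<in> new_vertices" "last P \<in> A" | "hd P \<in> new_vertices" "last P \<in> new_vertices"
    using P(3,4) unfolding A'_def by blast
  then show "ancestor_comparable p' (hd P) (last P)"
  proof cases
    case 1
    then have "ancestor_comparable p (hd P) (last P)"
      using normal P inner unfolding normal_parent_def A'_def by blast
    then show ?thesis unfolding ancestor_comparable_def using ancestor_p'_old 1 by blast
  next
    case 2
    obtain s i where si: "s \<in> missing n A" "i < length (branch s)" "last P = branch s ! i"
      using 2(2) by (rule new_vertexE)
    have "ancestor p' r (last (rev P)) (hd (rev P))"
      using A'_path_new_old[OF si(1,2) rev(1,2)] inner_rev[OF inner] si(3) rev(3,4) 2(1) by simp
    then show ?thesis unfolding ancestor_comparable_def using rev(3,4) by simp
  next
    case 3
    obtain s i where si: "s \<in> missing n A" "i < length (branch s)" "hd P = branch s ! i"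
      using 3(1) by (rule new_vertexE)
    show ?thesis unfolding ancestor_comparable_def
      using A'_path_new_old[OF si(1,2) P(1,2) si(3) 3(2) inner] by simp
  next
    case 4
    obtain s i where "s \<in> missing n A" "i < length (branch s)" "hd P = branch s ! i"
      using 4(1) by (rule new_vertexE)
    moreover obtain s' j where "s' \<in> missing n A" "j < length (branch s')" "last P = branch s' ! j"
      using 4(2) by (rule new_vertexE)
    ultimately show ?thesis using A'_path_new_new[OF _ _ _ _ P(1) _ _ inner] by blast
  qed
qed

lemma comparable_new_same_branch:
  assumes s0: "s0 \<in> missing n A" "i0 < length (branch s0)"
    and x: "x \<in> new_vertices" "ancestor_comparable p' x (branch s0 ! i0)"
  shows "x \<in> set (branch s0)"
proof -
  obtain s i where si: "s \<in> missing n A" "i < length (branch s)" "x = branch s ! i"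
    using x(1) by (rule new_vertexE)
  have "x \<notin> A" using si branch_nth_not_in_A by blast
  have "ancestor p' r x (branch s0 ! i0) \<or> ancestor p' r (branch s0 ! i0) x"
    using x(2) unfolding ancestor_comparable_def .
  then show ?thesis
  proof
    assume "ancestor p' r x (branch s0 ! i0)"
    then have "(\<exists>j\<le>i0. x = branch s0 ! j) \<or> ancestor p r x (anchor s0)"
      using ancestor_p'_branch[OF s0] by simp
    then show ?thesis using pt.ancestor_in anchor_in[OF s0(1)] s0(2) \<open>x \<notin> A\<close> by fastforce
  next
    assume "ancestor p' r (branch s0 ! i0) x"
    then have "(\<exists>j\<le>i. branch s0 ! i0 = branch s ! j) \<or> ancestor p r (branch s0 ! i0) (anchor s)"
      using ancestor_p'_branch[OF si(1,2)] si(3) by simp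
    then have "s = s0"
      using pt.ancestor_in anchor_in[OF si(1)] branch_nth_not_in_A[OF s0]
        branch_unique[OF si(1) s0(1)] si(2) s0 by (metis le_less_trans nth_mem)
    then show ?thesis using si by simp
  qed
qed

text \<open>A chain of T_(n+1) meets the new vertices inside a single branch.\<close>
lemma finite_chains_A':
  assumes K: "K \<subseteq> A'" "\<forall>a\<in>K. \<forall>b\<in>K. ancestor_comparable p' a b"
  shows "finite K"
proof -
  have "finite (K \<inter> A)"
    using finite_chains[of "K \<inter> A"] K(2) ancestor_p'_old unfolding ancestor_comparable_def
    by blast
  moreover have "finite (K - A)"
  proof (cases "K - A = {}")
    case False
    then obtain x0 where x0: "x0 \<in> K" "x0 \<notin> A" by blast
    then have "x0 \<in> new_vertices" using K(1) unfolding A'_def by blast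
    then obtain s0 i0 where s0: "s0 \<in> missing n A" "i0 < length (branch s0)" "x0 = branch s0 ! i0"
      by (rule new_vertexE)
    have "K - A \<subseteq> set (branch s0)"
      using comparable_new_same_branch[OF s0(1,2)] K x0 s0(3) unfolding A'_def by blast
    then show ?thesis using finite_subset by blast
  qed (metis finite.emptyI)
  ultimately show ?thesis by (metis Int_Diff_Un finite_UnI)
qed

lemma parent_A':
  assumes x: "x \<in> A'" "x \<noteq> r"
  shows "p' x \<in> A' \<and> h' (p' x) < h' x \<and> (x, p' x) \<in> E"
proof (cases "x \<in> A")
  case True
  then show ?thesis using parent[OF True x(2)] p'_old h'_old unfolding A'_def by auto
next
  case False
  then have "x \<in> new_vertices" using x unfolding A'_def by blast
  then obtain s i where si: "s \<in> missing n A" "i < length (branch s)" "x = branch s ! i"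
    by (rule new_vertexE)
  show ?thesis
  proof (cases i)
    case 0
    then have "(x, anchor s) \<in> E"
      using branch_hd[OF si(1)] si(3) branch_path[OF si(1)] is_path_nonempty
      by (metis hd_conv_nth)
    then show ?thesis
      using 0 si anchor_in[OF si(1)] p'_branch[OF si(1,2)] h'_old unfolding A'_def by auto
  next
    case (Suc k)
    then have k: "k < length (branch s)" using si(2) by simp
    have "(branch s ! k, branch s ! Suc k) \<in> E"
      using branch_path[OF si(1)] si(2) Suc unfolding is_path_def by simp
    moreover have "branch s ! k \<in> new_vertices"
      unfolding new_vertices_def using si(1) nth_mem[OF k] by blast
    ultimately show ?thesis
      using Suc si p'_branch[OF si(1,2)] p'_branch[OF si(1) k] sym_E
      unfolding A'_def by (auto dest: symD)
  qed
qed

lemma low_vertices_in_A': "x \<in> VT \<Longrightarrow> height x \<le> Suc n \<Longrightarrow> x \<in> A'"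
proof -
  assume x: "x \<in> VT" "height x \<le> Suc n"
  show "x \<in> A'"
  proof (cases "height x \<le> n \<or> x \<in> A")
    case False
    then have s: "x \<in> missing n A" unfolding missing_def using x by simp
    then have "x \<in> set (branch x)"
      using branch_last[OF s] branch_path[OF s] is_path_nonempty by (metis last_in_set)
    then show ?thesis unfolding A'_def new_vertices_def using s by blast
  qed (use low_vertices_in x in \<open>auto simp: A'_def\<close>)
qed

lemma stage_inv_A': "stage_inv (Suc n) A' p' h'"
  unfolding stage_inv_def
proof (intro conjI ballI allI impI)
  show "r \<in> A'" using root_in_A unfolding A'_def by blast
  have "set (branch s) \<subseteq> V" if "s \<in> missing n A" for s
    using branch_outside[OF that] component_subset[of s "V - A" E] missingD[OF that] by blast
  then show "A' \<subseteq> V" using A_subset unfolding A'_def new_vertices_def by (simp add: UN_least)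
  show "normal_parent A' p'" by (rule normal_parent_A')
  fix x assume "x \<in> A'" "x \<noteq> r"
  with parent_A' show "p' x \<in> A'" "h' (p' x) < h' x" "(x, p' x) \<in> E" by simp_all
next
  fix K assume "K \<subseteq> A' \<and> (\<forall>a\<in>K. \<forall>b\<in>K. ancestor_comparable p' a b)"
  then show "finite K" using finite_chains_A' by simp
next
  fix x assume "x \<in> VT" "height x \<le> Suc n"
  then show "x \<in> A'" by (rule low_vertices_in_A')
qed

end

context weak_normal_graph_tree
begin

primrec stage :: "nat \<Rightarrow> 'a set \<times> ('a \<Rightarrow> 'a) \<times> ('a \<Rightarrow> nat)" where
  "stage 0 = ({r}, \<lambda>x. x, \<lambda>_. 0)"
| "stage (Suc n) = (case stage n of (A, p, h) \<Rightarrow>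
     (extension_step.A' V E VT ET r n A p, extension_step.p' V E VT ET r n A p,
      extension_step.h' V E VT ET r n A p h))"

definition stage_A :: "nat \<Rightarrow> 'a set" where "stage_A n = fst (stage n)"
definition stage_p :: "nat \<Rightarrow> 'a \<Rightarrow> 'a" where "stage_p n = fst (snd (stage n))"
definition stage_h :: "nat \<Rightarrow> 'a \<Rightarrow> nat" where "stage_h n = snd (snd (stage n))"

lemma stage_Suc:
  "stage_A (Suc n) = extension_step.A' V E VT ET r n (stage_A n) (stage_p n)"
  "stage_p (Suc n) = extension_step.p' V E VT ET r n (stage_A n) (stage_p n)"
  "stage_h (Suc n) = extension_step.h' V E VT ET r n (stage_A n) (stage_p n) (stage_h n)"
  unfolding stage_A_def stage_p_def stage_h_def by (simp_all split: prod.split)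

lemma extension_step_stage: "extension_step V E VT ET r n (stage_A n) (stage_p n) (stage_h n)"
proof (induction n)
  case 0
  show ?case
    by unfold_locales (use stage_inv_0 in \<open>simp add: stage_A_def stage_p_def stage_h_def\<close>)
next
  case (Suc n)
  show ?case
    by unfold_locales (simp only: stage_Suc extension_step.stage_inv_A'[OF Suc.IH])
qed

lemma stage_extends:
  "stage_A n \<subseteq> stage_A (Suc n)"
  "x \<in> stage_A n \<Longrightarrow> stage_p (Suc n) x = stage_p n x \<and> stage_h (Suc n) x = stage_h n x"
  unfolding stage_Suc extension_step.A'_def[OF extension_step_stage]
  using extension_step.p'_old[OF extension_step_stage] extension_step.h'_old[OF extension_step_stage]
  by auto

lemma stage_mono:
  "n \<le> m \<Longrightarrow> stage_A n \<subseteq> stage_A m \<and>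
    (\<forall>x\<in>stage_A n. stage_p m x = stage_p n x \<and> stage_h m x = stage_h n x)"
proof (induction m rule: dec_induct)
  case (step m)
  then show ?case using stage_extends[where n = m] by fastforce
qed simp

definition A_lim :: "'a set" where
  "A_lim = (\<Union>n. stage_A n)"

definition p_lim :: "'a \<Rightarrow> 'a" where
  "p_lim x = stage_p (LEAST n. x \<in> stage_A n) x"

definition h_lim :: "'a \<Rightarrow> nat" where
  "h_lim x = stage_h (LEAST n. x \<in> stage_A n) x"

lemma lim_eq_stage: "x \<in> stage_A n \<Longrightarrow> p_lim x = stage_p n x \<and> h_lim x = stage_h n x"
proof -
  assume x: "x \<in> stage_A n"
  have "(LEAST n. x \<in> stage_A n) \<le> n" using x by (rule Least_le)
  moreover have "x \<in> stage_A (LEAST n. x \<in> stage_A n)" using x by (rule LeastI)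
  ultimately show ?thesis unfolding p_lim_def h_lim_def using stage_mono by metis
qed

lemma stage_parent:
  "x \<in> stage_A n \<Longrightarrow> x \<noteq> r \<Longrightarrow>
    stage_p n x \<in> stage_A n \<and> stage_h n (stage_p n x) < stage_h n x \<and> (x, stage_p n x) \<in> E"
  by (rule extension_step.parent[OF extension_step_stage])

lemma parent_tree_lim: "parent_tree A_lim p_lim h_lim r"
proof
  show "r \<in> A_lim"
    unfolding A_lim_def using extension_step.root_in_A[OF extension_step_stage] by blast
next
  fix x assume x: "x \<in> A_lim" "x \<noteq> r"
  then obtain n where n: "x \<in> stage_A n" unfolding A_lim_def by blast
  then show "p_lim x \<in> A_lim" "h_lim (p_lim x) < h_lim x"
    using stage_parent[OF n x(2)] lim_eq_stage unfolding A_lim_def by auto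
qed

lemma ancestor_lim: "ancestor (stage_p n) r x y \<Longrightarrow> y \<in> stage_A n \<Longrightarrow> ancestor p_lim r x y"
proof (induction rule: ancestor.induct)
  case (ancestor_parent x y)
  then have "stage_p n y \<in> stage_A n" "p_lim y = stage_p n y"
    using stage_parent lim_eq_stage by auto
  then show ?case using ancestor_parent ancestor.ancestor_parent[of p_lim r x y] by simp
qed (rule ancestor_refl)

text \<open>
  An A_lim-path with ends in some stage avoids that stage in its interior, so normality of the
  stage applies.
\<close>
lemma normal_tree_graph_lim: "normal_tree_graph V E A_lim (parent_edges A_lim p_lim r) r"
  unfolding normal_tree_graph_def
proof (intro conjI allI impI; (elim conjE)?)
  interpret parent_tree A_lim p_lim h_lim r by (rule parent_tree_lim)
  show "rooted_tree A_lim PE r" by (rule rooted_tree)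
  show "A_lim \<subseteq> V" unfolding A_lim_def using extension_step.A_subset[OF extension_step_stage] by blast
  have "(x, p_lim x) \<in> E" if "x \<in> A_lim" "x \<noteq> r" for x
    using that stage_parent lim_eq_stage unfolding A_lim_def by fastforce
  then show "PE \<subseteq> E" unfolding parent_edges_def using sym_E by (auto dest: symD)
  fix P assume P: "is_path E P" "2 \<le> length P" "hd P \<in> A_lim" "last P \<in> A_lim"
    and inner: "\<forall>i. 0 < i \<and> i < length P - 1 \<longrightarrow> P ! i \<notin> A_lim"
  obtain n1 n2 where "hd P \<in> stage_A n1" "last P \<in> stage_A n2" using P(3,4) unfolding A_lim_def by blast
  then have ends: "hd P \<in> stage_A (max n1 n2)" "last P \<in> stage_A (max n1 n2)"
    using stage_mono[of n1 "max n1 n2"] stage_mono[of n2 "max n1 n2"] by auto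
  moreover have "\<forall>i. 0 < i \<and> i < length P - 1 \<longrightarrow> P ! i \<notin> stage_A (max n1 n2)"
    using inner unfolding A_lim_def by blast
  ultimately have "ancestor_comparable (stage_p (max n1 n2)) (hd P) (last P)"
    using extension_step.normal[OF extension_step_stage] P(1,2) unfolding normal_parent_def by blast
  then show "comparable_T PE r (hd P) (last P)"
    unfolding ancestor_comparable_def comparable_T_def tree_le_parent_edges
    using ancestor_lim ends P(3,4) by blast
qed

lemma tree_subset_lim: "VT \<subseteq> A_lim"
  unfolding A_lim_def using extension_step.low_vertices_in[OF extension_step_stage] by blast

end

lemma weak_normal_tree_imp_normal_tree_graph:
  assumes "E \<subseteq> V \<times> V" "sym E" "weak_normal_tree V (graph_C V E) VT ET r"
  shows "\<exists>VT' ET' r'. normal_tree_graph V E VT' ET' r' \<and> VT \<subseteq> VT'"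
proof -
  interpret weak_normal_graph_tree V E VT ET r using assms by unfold_locales
  show ?thesis using normal_tree_graph_lim tree_subset_lim by blast
qed

theorem proposition5p1:
  fixes V :: "'a set" and E :: "('a \<times> 'a) set" and U :: "'a set"
  assumes "E \<subseteq> V \<times> V" and "sym E" and "U \<subseteq> V"
  shows "((\<exists>VT ET r. normal_tree_graph V E VT ET r \<and> U \<subseteq> VT)
           \<longleftrightarrow> (\<exists>VT ET r. normal_tree_cn V (graph_C V E) VT ET r \<and> U \<subseteq> VT))
       \<and> ((\<exists>VT ET r. normal_tree_cn V (graph_C V E) VT ET r \<and> U \<subseteq> VT)
           \<longleftrightarrow> (\<exists>VT ET r. weak_normal_tree V (graph_C V E) VT ET r \<and> U \<subseteq> VT))"
proof -
  have a_b: "normal_tree_graph V E VT ET r \<Longrightarrow> normal_tree_cn V (graph_C V E) VT ET r"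
    for VT ET r using normal_tree_graph_imp_normal_tree_cn[OF assms(2)] .
  have b_c: "normal_tree_cn V (graph_C V E) VT ET r \<Longrightarrow> weak_normal_tree V (graph_C V E) VT ET r"
    for VT ET r unfolding normal_tree_cn_def by blast
  have c_a: "weak_normal_tree V (graph_C V E) VT ET r \<Longrightarrow> U \<subseteq> VT \<Longrightarrow>
      \<exists>VT' ET' r'. normal_tree_graph V E VT' ET' r' \<and> U \<subseteq> VT'" for VT ET r
    using weak_normal_tree_imp_normal_tree_graph[OF assms(1,2)] by blast
  show ?thesis
  proof (intro conjI iffI)
    show "\<exists>VT ET r. normal_tree_cn V (graph_C V E) VT ET r \<and> U \<subseteq> VT"
      if "\<exists>VT ET r. normal_tree_graph V E VT ET r \<and> U \<subseteq> VT" using that a_b by blast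
    show "\<exists>VT ET r. normal_tree_graph V E VT ET r \<and> U \<subseteq> VT"
      if "\<exists>VT ET r. normal_tree_cn V (graph_C V E) VT ET r \<and> U \<subseteq> VT" using that b_c c_a by blast
    show "\<exists>VT ET r. weak_normal_tree V (graph_C V E) VT ET r \<and> U \<subseteq> VT"
      if "\<exists>VT ET r. normal_tree_cn V (graph_C V E) VT ET r \<and> U \<subseteq> VT" using that b_c by blast
    show "\<exists>VT ET r. normal_tree_cn V (graph_C V E) VT ET r \<and> U \<subseteq> VT"
      if "\<exists>VT ET r. weak_normal_tree V (graph_C V E) VT ET r \<and> U \<subseteq> VT" using that c_a a_b by blast
  qed
qed

end
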